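(* Let $c\ge3$ be an integer and $K(t,t')=\frac{2c}{c+1}\cdot\frac{t'^{2/(c-1)}}{\sum_{i=1}^{t} i^{2/(c-1)}}\cdot\mathbf{1}[t\ge t']$ for positive integers $t,t'$. Then for all positive integers $t''<t$, $$\sum_{q=t''}^{t-1}K(q,t'')\ge c\left(1-\left(\frac{t''}{t}\right)^{2/(c-1)}\right).$$ *)

theory Defs
  imports Complex_Main
begin

definition kerK :: "nat \<Rightarrow> nat \<Rightarrow> nat \<Rightarrow> real" where
  "kerK c t t' = (2 * real c / (real c + 1)) *
     (real t' powr (2 / (real c - 1)) / (\<Sum>i=1..t. real i powr (2 / (real c - 1)))) *
     (if t \<ge> t' then 1 else 0)"

end

theory Submission
  imports Defs "HOL-Analysis.Convex"
begin

(* With a = 2/(c-1), which lies in (0,1], and S_q = sum_{i=1..q} i^a, the kernel is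
   K(q,t'') = c a/(a+1) t''^a / S_q for q >= t''. The sum telescopes once every term
   dominates c t''^a (q^-a - (q+1)^-a), i.e. once (a+1) (q^-a - (q+1)^-a) S_q <= a.
   For this, S_q is bounded above by the trapezoid rule for the concave function x^a,
   and q^-a - (q+1)^-a is bounded above via a rational lower bound for (1 + 1/q)^-a,
   proved by showing that the logarithm of the ratio of the two sides is monotone. *)

lemma powr_le_tangent:
  fixes a x y :: real
  assumes "0 \<le> a" "a \<le> 1" "0 < x" "0 < y"
  shows "x powr a \<le> y powr a + a * y powr (a - 1) * (x - y)"
proof -
  have y_powr: "y powr a = y powr (a - 1) * y"
    using assms by (simp add: powr_diff)
  have "x powr a = y powr a * (x / y) powr a"
    using assms by (simp add: powr_divide)
  also have "\<dots> \<le> y powr a * (a * (x / y) + (1 - a))"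
    using Youngs_inequality_0[of a "1 - a" "x / y" 1] assms by (intro mult_left_mono) auto
  also have "\<dots> = y powr a + a * y powr (a - 1) * (x - y)"
    using assms by (simp add: y_powr field_simps)
  finally show ?thesis .
qed

lemma powr_trapezoid_le_integral:
  fixes a q :: real
  assumes a: "0 \<le> a" "a \<le> 1" and q: "0 < q"
  shows "(q powr a + (q + 1) powr a) / 2 \<le> ((q + 1) powr (a + 1) - q powr (a + 1)) / (a + 1)"
proof -
  define g where "g u = ((q + u) powr (a + 1) - q powr (a + 1)) / (a + 1) - u * (q powr a + (q + u) powr a) / 2" for u
  define g' where "g' u = ((q + u) powr a - q powr a - a * u * (q + u) powr (a - 1)) / 2" for u
  have "(g has_real_derivative g' u) (at u)" if "u \<in> {0..1}" for u
  proof -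
    have "q + u > 0" using that q by auto
    then have "(g has_real_derivative ((a + 1) * (q + u) powr (a + 1 - 1) / (a + 1)
        - ((q powr a + (q + u) powr a) + u * (a * (q + u) powr (a - 1))) / 2)) (at u)"
      unfolding g_def by (auto intro!: derivative_eq_intros)
    then show ?thesis
      by (rule DERIV_cong) (use a in \<open>simp add: g'_def field_simps\<close>)
  qed
  moreover have "g' u \<ge> 0" if "u \<in> {0..1}" for u
  proof -
    have "q powr a \<le> (q + u) powr a - a * u * (q + u) powr (a - 1)"
      using powr_le_tangent[OF a q, of "q + u"] that q by (simp add: algebra_simps)
    then show ?thesis unfolding g'_def by simp
  qed
  ultimately have "g 0 \<le> g 1"
    by (rule deriv_nonneg_imp_mono) simp_all
  then show ?thesis unfolding g_def by simp
qed

definition trapezoid_bound :: "real \<Rightarrow> real \<Rightarrow> real" where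
  "trapezoid_bound a q = (q powr (a + 1) - (1 - a) / 2) / (a + 1) + q powr a / 2"

lemma sum_powr_le_trapezoid_bound:
  fixes a :: real
  assumes a: "0 \<le> a" "a \<le> 1" and n: "1 \<le> n"
  shows "(\<Sum>i=1..n. real i powr a) \<le> trapezoid_bound a (real n)"
  using n
proof (induction n rule: nat_induct_at_least)
  case base
  show ?case using a by (simp add: trapezoid_bound_def field_simps)
next
  case (Suc n)
  have "(\<Sum>i=1..Suc n. real i powr a) = (\<Sum>i=1..n. real i powr a) + (real n + 1) powr a"
    by (simp add: add.commute)
  also have "\<dots> \<le> trapezoid_bound a (real n) + (real n + 1) powr a"
    using Suc.IH by simp
  also have "\<dots> \<le> trapezoid_bound a (real n + 1)"
    using powr_trapezoid_le_integral[OF a, of "real n"] Suc.hyps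
    unfolding trapezoid_bound_def by (simp add: diff_divide_distrib add_divide_distrib)
  finally show ?case by (simp add: add.commute)
qed

lemma one_plus_powr_mult_le:
  fixes a x :: real
  assumes a: "0 \<le> a" "a \<le> 1" and x: "0 \<le> x" "x \<le> 1"
  shows "(1 + x) powr a * (1 + (1 - a) * x * (1 - x) / 2) \<le> 1 + (a + 1) * x / 2 - (1 - a) * x\<^sup>2 / 2"
proof -
  define P where "P z = 1 + (a + 1) * z / 2 - (1 - a) * z\<^sup>2 / 2" for z
  define Q where "Q z = 1 + (1 - a) * z * (1 - z) / 2" for z
  define P' where "P' z = (a + 1) / 2 - (1 - a) * z" for z
  define Q' where "Q' z = (1 - a) * (1 - 2 * z) / 2" for z
  have P_pos: "P z > 0" and Q_pos: "Q z > 0" if "z \<in> {0..1}" for z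
  proof -
    have "(1 - a) * z\<^sup>2 \<le> (1 + a) * z * 1"
      unfolding power2_eq_square mult.assoc[symmetric] using that a by (intro mult_mono) auto
    then show "P z > 0" using that a unfolding P_def by (simp add: add.commute)
    have "(1 - a) * z * (1 - z) \<ge> 0" using that a by (intro mult_nonneg_nonneg) auto
    then show "Q z > 0" by (simp add: Q_def)
  qed
  have dP: "(P has_real_derivative P' z) (at z)" and dQ: "(Q has_real_derivative Q' z) (at z)" for z
    unfolding P_def P'_def Q_def Q'_def by (auto intro!: derivative_eq_intros simp: field_simps)
  define \<phi> where "\<phi> z = ln (Q z) - ln (P z) + a * ln (1 + z)" for z
  define \<phi>' where "\<phi>' z = Q' z / Q z - P' z / P z + a / (1 + z)" for z
  have "(\<phi> has_real_derivative \<phi>' z) (at z)" if "z \<in> {0..x}" for z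
    using that x P_pos[of z] Q_pos[of z] unfolding \<phi>_def \<phi>'_def
    by (auto intro!: derivative_eq_intros dP dQ)
  moreover have "\<phi>' z \<le> 0" if "z \<in> {0..x}" for z
  proof -
    have z: "0 \<le> z" "z \<le> 1" "1 + z > 0" "P z > 0" "Q z > 0" using that x P_pos Q_pos by auto
    have numerator: "Q' z * P z * (1 + z) - P' z * Q z * (1 + z) + a * P z * Q z
        = - (a * (1 - a) * z\<^sup>2 * (5 - a + 4 * z - (1 - a) * z\<^sup>2) / 4)"
      unfolding P_def Q_def P'_def Q'_def by (simp add: field_simps power2_eq_square)
    have "\<phi>' z = (Q' z * P z * (1 + z) - P' z * Q z * (1 + z) + a * P z * Q z) / (P z * Q z * (1 + z))"
      using z(3-5) unfolding \<phi>'_def by (simp add: field_simps)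
    also have "\<dots> = - (a * (1 - a) * z\<^sup>2 * (5 - a + 4 * z - (1 - a) * z\<^sup>2) / 4) / (P z * Q z * (1 + z))"
      by (simp only: numerator)
    also have "\<dots> \<le> 0"
    proof -
      have "(1 - a) * z\<^sup>2 \<le> 1" using z a by (intro mult_le_one) (auto intro: power_le_one)
      then show ?thesis using z a by (intro divide_nonpos_pos) auto
    qed
    finally show ?thesis .
  qed
  ultimately have "\<phi> x \<le> \<phi> 0"
    by (rule deriv_nonpos_imp_antimono) (simp_all add: x)
  then have "ln ((1 + x) powr a * Q x) \<le> ln (P x)"
    using x Q_pos[of x] by (simp add: \<phi>_def P_def Q_def ln_mult)
  then show ?thesis
    using x P_pos[of x] Q_pos[of x] unfolding P_def Q_def by simp
qed

lemma powr_neg_diff_mult_trapezoid_bound_le: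
  fixes a q :: real
  assumes a: "0 \<le> a" "a \<le> 1" and q: "1 \<le> q"
  shows "(a + 1) * (q powr - a - (q + 1) powr - a) * trapezoid_bound a q \<le> a"
proof -
  define x where "x = 1 / q"
  define A where "A = q powr a"
  define P where "P = 1 + (a + 1) * x / 2 - (1 - a) * x\<^sup>2 / 2"
  have x: "0 < x" "x \<le> 1" and A_pos: "0 < A" using q by (auto simp: x_def A_def)
  have Q_eq: "P - a * x = 1 + (1 - a) * x * (1 - x) / 2"
    by (simp add: P_def power2_eq_square field_simps)
  have "(1 - a) * x * (1 - x) \<ge> 0" using a x by (intro mult_nonneg_nonneg) auto
  then have "P - a * x \<ge> 1" unfolding Q_eq by simp
  moreover have "0 \<le> a * x" using a x by simp
  ultimately have P_pos: "P > 0" by linarith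
  have "(1 + x) powr a * (P - a * x) \<le> P"
    unfolding Q_eq using one_plus_powr_mult_le[OF a, of x] x by (simp add: P_def)
  then have "P - a * x \<le> P / (1 + x) powr a"
    using x by (simp add: pos_le_divide_eq mult.commute)
  then have decrement: "1 - (1 + x) powr - a \<le> a * x / P"
    using x P_pos by (simp add: powr_minus_divide field_simps)
  have "q + 1 = q * (1 + x)" using q by (simp add: x_def field_simps)
  then have "(q + 1) powr - a = q powr - a * (1 + x) powr - a"
    using q x by (simp add: powr_mult)
  then have diff_eq: "q powr - a - (q + 1) powr - a = (1 - (1 + x) powr - a) / A"
    using A_pos by (simp add: A_def powr_minus_divide field_simps)
  have "A \<le> q" using q a powr_mono[of a 1 q] by (simp add: A_def)
  then have "(1 - a) * A \<le> (1 - a) * q" using a by (intro mult_left_mono) auto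
  then have "(1 - a) * A / q \<le> 1 - a" using q by (simp add: pos_divide_le_eq)
  moreover have "(a + 1) * trapezoid_bound a q = A * q - (1 - a) / 2 + (a + 1) * A / 2"
    using a q by (simp add: trapezoid_bound_def A_def powr_add distrib_left)
  moreover have "A * q * P = A * q + (a + 1) * A / 2 - (1 - a) * A / q / 2"
    using q by (simp add: P_def x_def field_simps power2_eq_square)
  ultimately have T_le: "(a + 1) * trapezoid_bound a q \<le> A * q * P" by simp
  have "1 \<le> q powr (a + 1)" using q a by (simp add: ge_one_powr_ge_zero)
  then have "0 \<le> trapezoid_bound a q"
    using a by (auto simp: trapezoid_bound_def intro!: add_nonneg_nonneg divide_nonneg_pos)
  then have T_nonneg: "0 \<le> (a + 1) * trapezoid_bound a q / A" using a A_pos by simp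
  have "(a + 1) * (q powr - a - (q + 1) powr - a) * trapezoid_bound a q
      = (1 - (1 + x) powr - a) * ((a + 1) * trapezoid_bound a q / A)"
    by (simp add: diff_eq)
  also have "\<dots> \<le> (a * x / P) * (A * q * P / A)"
    using P_pos A_pos a x
    by (intro mult_mono[OF decrement divide_right_mono[OF T_le]] T_nonneg) auto
  also have "\<dots> = a"
    using P_pos A_pos q by (simp add: x_def)
  finally show ?thesis .
qed

lemma kerK_ge_powr_neg_diff:
  fixes c q s :: nat
  assumes c: "3 \<le> c" and s: "0 < s" "s \<le> q"
  shows "real c * real s powr (2 / (real c - 1))
      * (real q powr - (2 / (real c - 1)) - (real q + 1) powr - (2 / (real c - 1))) \<le> kerK c q s"
proof -
  define a where "a = 2 / (real c - 1)"
  define S where "S = (\<Sum>i=1..q. real i powr a)"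
  define D where "D = real q powr - a - (real q + 1) powr - a"
  have a: "0 \<le> a" "a \<le> 1" using c by (auto simp: a_def field_simps)
  have q: "1 \<le> q" using s by simp
  have "real 1 powr a \<le> S"
    unfolding S_def using q by (intro member_le_sum) auto
  then have S_pos: "0 < S" by simp
  have "D \<ge> 0" using a q by (simp add: D_def powr_mono2')
  then have "(a + 1) * D * S \<le> (a + 1) * D * trapezoid_bound a (real q)"
    using sum_powr_le_trapezoid_bound[OF a q] a by (simp add: S_def mult_left_mono)
  also have "\<dots> \<le> a"
    using powr_neg_diff_mult_trapezoid_bound_le[OF a, of "real q"] q by (simp add: D_def)
  finally have "D \<le> a / (a + 1) / S"
    using S_pos a by (simp add: pos_le_divide_eq mult.commute mult.left_commute)
  also have "a / (a + 1) = 2 / (real c + 1)"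
    using c by (simp add: a_def divide_simps) (simp add: algebra_simps)
  finally have "real c * real s powr a * D \<le> real c * real s powr a * (2 / (real c + 1) / S)"
    by (intro mult_left_mono) simp_all
  also have "\<dots> = kerK c q s"
    using s by (simp add: kerK_def a_def S_def)
  finally show ?thesis by (simp add: a_def D_def)
qed

theorem mainTheorem9:
  fixes c t t'' :: nat
  assumes "c \<ge> 3" and "0 < t''" and "t'' < t"
  shows "(\<Sum>q=t''..t-1. kerK c q t'') \<ge> real c * (1 - (real t'' / real t) powr (2 / (real c - 1)))"
proof -
  define a where "a = 2 / (real c - 1)"
  have telescope: "(\<Sum>q=t''..t-1. real q powr - a - (real (Suc q)) powr - a) = real t'' powr - a - real t powr - a"
    using sum_Suc_diff[of t'' "t - 1" "\<lambda>q. - (real q powr - a)"] assms by simp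
  have "real c * (1 - (real t'' / real t) powr a) = real c * real t'' powr a * (real t'' powr - a - real t powr - a)"
    using assms by (simp add: powr_divide powr_minus field_simps)
  also have "\<dots> = (\<Sum>q=t''..t-1. real c * real t'' powr a * (real q powr - a - (real q + 1) powr - a))"
    by (simp add: telescope[symmetric] sum_distrib_left add.commute)
  also have "\<dots> \<le> (\<Sum>q=t''..t-1. kerK c q t'')"
    using kerK_ge_powr_neg_diff[OF assms(1,2)] by (intro sum_mono) (simp add: a_def)
  finally show ?thesis unfolding a_def .
qed

end
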